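(* Let $N\in\mathbb N^+$, $\phi(\xi)=\xi\sqrt{\xi^2+1}$. Then there is $C>0$ independent of $N$ such that for all $0<|t|\le N^{-1}$ and all $x\in[-1,1]$, $$\Big|\sum_{1\le k\le N}e^{i(t\phi(k)+kx)}\Big|\le C|t|^{-1/2}.$$ *)

theory Defs
  imports Complex_Main
begin

definition phi :: "real \<Rightarrow> real" where
  "phi \<xi> = \<xi> * sqrt (\<xi>^2 + 1)"

end

theory Submission
  imports Defs "HOL-Analysis.Complex_Transcendental"
begin

text \<open>
  Write the sum as \<open>\<Sum> z k\<close> with \<open>z (k + 1) = z k * cis (g k)\<close>, where
  \<open>g k = t * (phi (k + 1) - phi k) + x\<close>. Since \<open>phi \<xi> - \<xi>\<^sup>2\<close> lies in \<open>[1/3, 1/2]\<close> for \<open>\<xi> \<ge> 1\<close>,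
  the second differences of \<open>phi\<close> are at least \<open>1\<close>, so \<open>g\<close> increases by at least \<open>t\<close> per step,
  and \<open>t * N \<le> 1\<close> keeps \<open>g\<close> inside \<open>[-1, 9/2]\<close>. Indices with \<open>\<bar>g k\<bar> < sqrt t\<close> are at most
  \<open>2 / sqrt t + 1\<close> in number; on the indices with \<open>g k \<ge> sqrt t\<close>, and on those with
  \<open>g k \<le> - sqrt t\<close> after shifting \<open>g\<close> by \<open>2 * pi\<close>, the Kuzmin--Landau inequality applies:
  summation by parts against \<open>1 / (cis (g k) - 1) = - (1 + \<i> * cot (g k / 2)) / 2\<close>, whose
  imaginary part is monotone in \<open>k\<close>, bounds the sum by \<open>1 + 2 * cot (sqrt t / 2) = O (1 / sqrt t)\<close>.
\<close>

lemma half_le_sin: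
  fixes y :: real assumes "0 \<le> y" "y \<le> 1" shows "y / 2 \<le> sin y"
proof -
  have "\<bar>sin y - (\<Sum>m<3. sin_coeff m * y ^ m)\<bar> \<le> inverse (fact 3) * \<bar>y\<bar> ^ 3"
    by (rule Maclaurin_sin_bound)
  moreover have "(\<Sum>m<3. sin_coeff m * y ^ m) = y"
    by (simp add: eval_nat_numeral sin_coeff_def)
  moreover have "y ^ 3 \<le> y"
    using assms power_le_one[of y 2] mult_left_le[of "y^2" y]
    by (simp add: power3_eq_cube power2_eq_square)
  ultimately show ?thesis using assms by (simp add: eval_nat_numeral) (smt (verit))
qed

lemma cot_antimono:
  assumes "0 < u" "u \<le> v" "v < pi" shows "cot v \<le> cot u"
proof -
  have "sin u > 0" "sin v > 0" using assms by (auto intro: sin_gt_zero)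
  moreover have "sin (v - u) \<ge> 0" using assms by (intro sin_ge_zero) auto
  ultimately show ?thesis by (simp add: cot_def sin_diff divide_simps algebra_simps)
qed

lemma cot_le_two_div:
  fixes y :: real
  assumes "0 < y" "y \<le> 1" shows "cot y \<le> 2 / y"
proof -
  have "y / 2 \<le> sin y" using assms by (intro half_le_sin) auto
  moreover have "sin y > 0" using assms pi_gt3 by (intro sin_gt_zero) auto
  ultimately have "cot y \<le> 1 / sin y" "1 / sin y \<le> 2 / y"
    using assms by (auto simp: cot_def divide_right_mono field_simps)
  thus ?thesis by linarith
qed

lemma inverse_cis_double_minus_one:
  assumes "sin u \<noteq> 0" shows "inverse (cis (2 * u) - 1) = - (1 + \<i> * of_real (cot u)) / 2"
proof (rule inverse_unique)
  have cis_double: "cis (2 * u) = Complex (1 - 2 * (sin u)\<^sup>2) (2 * sin u * cos u)"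
    by (simp add: complex_eq_iff sin_double cos_double_sin)
  show "(cis (2 * u) - 1) * (- (1 + \<i> * of_real (cot u)) / 2) = 1"
    unfolding cis_double using assms
    by (simp add: complex_eq_iff cot_def field_simps power2_eq_square)
      (metis sin_cos_squared_add3 distrib_right mult.assoc mult_1)
qed

lemma summation_by_parts:
  fixes a z :: "nat \<Rightarrow> 'a::comm_ring"
  assumes "m \<le> n"
  shows "(\<Sum>k=m..n. a k * (z (Suc k) - z k))
       = a n * z (Suc n) - a m * z m - (\<Sum>k=m..<n. (a (Suc k) - a k) * z (Suc k))"
  using assms
proof (induction n rule: dec_induct)
  case (step n)
  then show ?case by (simp add: algebra_simps)
qed (simp add: algebra_simps)

lemma kuzmin_landau:
  fixes z :: "nat \<Rightarrow> complex" and g :: "nat \<Rightarrow> real"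
  assumes "m \<le> n"
    and rotate: "\<And>k. k \<in> {m..n} \<Longrightarrow> z (Suc k) = z k * cis (g k)"
    and range: "\<And>k. k \<in> {m..n} \<Longrightarrow> g k \<in> {\<delta>..2 * pi - \<delta>}"
    and mono: "\<And>k. k \<in> {m..<n} \<Longrightarrow> g k \<le> g (Suc k)"
    and unit: "\<And>k. cmod (z k) = 1" and "0 < \<delta>"
  shows "cmod (\<Sum>k=m..n. z k) \<le> 1 + 2 * cot (\<delta> / 2)"
proof -
  define c where "c k = cot (g k / 2)" for k
  define a where "a k = - (1 + \<i> * of_real (c k)) / 2" for k
  define K where "K = cot (\<delta> / 2)"
  have c_bounds: "- K \<le> c k \<and> c k \<le> K" if "k \<in> {m..n}" for k
  proof
    show "c k \<le> K"
      unfolding c_def K_def using range[OF that] \<open>0 < \<delta>\<close> by (intro cot_antimono) auto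
    have "cot (pi - \<delta> / 2) \<le> c k"
      unfolding c_def using range[OF that] \<open>0 < \<delta>\<close> by (intro cot_antimono) auto
    then show "- K \<le> c k" by (simp add: K_def cot_def)
  qed
  have c_antimono: "c (Suc k) \<le> c k" if "k \<in> {m..<n}" for k
    unfolding c_def using range[of k] range[of "Suc k"] mono[OF that] that \<open>0 < \<delta>\<close>
    by (intro cot_antimono) auto
  \<comment> \<open>\<open>a k = 1 / (cis (g k) - 1)\<close>, so each term is a first difference of \<open>z\<close> weighted by \<open>a k\<close>.\<close>
  have z_eq: "z k = a k * (z (Suc k) - z k)" if "k \<in> {m..n}" for k
  proof -
    have "sin (g k / 2) \<noteq> 0"
      using range[OF that] \<open>0 < \<delta>\<close> by (intro sin_gt_zero [THEN less_imp_neq, symmetric]) auto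
    then have "a k = inverse (cis (g k) - 1)"
      using inverse_cis_double_minus_one[of "g k / 2"] by (simp add: a_def c_def)
    moreover have "a k \<noteq> 0" by (simp add: a_def complex_eq_iff)
    ultimately have "a k * (cis (g k) - 1) = 1" by (auto simp: field_simps)
    then show ?thesis
      by (metis rotate[OF that] mult.left_commute mult.right_neutral right_diff_distrib')
  qed
  have a_norm: "cmod (a k) \<le> (1 + K) / 2" if "k \<in> {m..n}" for k
  proof -
    have "cmod (a k) \<le> (cmod 1 + cmod (\<i> * of_real (c k))) / 2"
      unfolding a_def norm_divide norm_minus_cancel
      using norm_triangle_ineq[of 1 "\<i> * of_real (c k)"] by simp
    then show ?thesis using c_bounds[OF that] by (simp add: norm_mult) arith
  qed
  have a_diff_norm: "cmod ((a (Suc k) - a k) * z (Suc k)) = (c k - c (Suc k)) / 2"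
    if "k \<in> {m..<n}" for k
  proof -
    have "a (Suc k) - a k = - \<i> * of_real (c (Suc k) - c k) / 2"
      by (simp add: a_def field_simps)
    then show ?thesis using c_antimono[OF that] by (simp add: norm_mult unit flip: of_real_diff)
  qed
  have "(\<Sum>k=m..n. z k) = (\<Sum>k=m..n. a k * (z (Suc k) - z k))"
    by (intro sum.cong refl z_eq)
  also have "\<dots> = a n * z (Suc n) - a m * z m - (\<Sum>k=m..<n. (a (Suc k) - a k) * z (Suc k))"
    by (rule summation_by_parts[OF \<open>m \<le> n\<close>])
  finally have "cmod (\<Sum>k=m..n. z k)
      \<le> cmod (a n * z (Suc n)) + cmod (a m * z m) + cmod (\<Sum>k=m..<n. (a (Suc k) - a k) * z (Suc k))"
    by (smt (verit) norm_triangle_ineq4)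
  also have "\<dots> \<le> cmod (a n) + cmod (a m) + (\<Sum>k=m..<n. cmod ((a (Suc k) - a k) * z (Suc k)))"
    using norm_sum[of "\<lambda>k. (a (Suc k) - a k) * z (Suc k)" "{m..<n}"] by (simp add: norm_mult unit)
  also have "(\<Sum>k=m..<n. cmod ((a (Suc k) - a k) * z (Suc k))) = (\<Sum>k=m..<n. (c k - c (Suc k)) / 2)"
    by (rule sum.cong) (simp_all add: a_diff_norm)
  also have "\<dots> = (c m - c n) / 2"
    using sum_Suc_diff'[OF \<open>m \<le> n\<close>, of c] by (simp add: sum_divide_distrib[symmetric] sum_subtractf)
  finally show ?thesis
    using a_norm[of m] a_norm[of n] c_bounds[of m] c_bounds[of n] \<open>m \<le> n\<close>
    by (simp add: K_def field_simps)
qed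

lemma increments_imp_le:
  fixes g :: "nat \<Rightarrow> real"
  assumes incr: "\<And>k. k \<in> {m..<n} \<Longrightarrow> g k + t \<le> g (Suc k)" and "m \<le> k" "k \<le> l" "l \<le> n"
  shows "g k + t * real (l - k) \<le> g l"
  using \<open>k \<le> l\<close> \<open>l \<le> n\<close>
proof (induction l rule: dec_induct)
  case (step l)
  then have "g l + t \<le> g (Suc l)" using incr \<open>m \<le> k\<close> by simp
  with step show ?case by (simp add: Suc_diff_le algebra_simps)
qed simp

lemma card_between_le:
  fixes g :: "nat \<Rightarrow> real"
  assumes incr: "\<And>k. k \<in> {m..<n} \<Longrightarrow> g k + t \<le> g (Suc k)" and "0 < t" "a \<le> b"
  shows "real (card {k\<in>{m..n}. a < g k \<and> g k < b}) \<le> (b - a) / t + 1"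
proof (cases "{k\<in>{m..n}. a < g k \<and> g k < b} = {}")
  case True
  have "0 \<le> (b - a) / t" using assms by simp
  then show ?thesis unfolding True by simp
next
  case False
  define B where "B = {k\<in>{m..n}. a < g k \<and> g k < b}"
  have "finite B" "B \<noteq> {}" using False by (simp_all add: B_def)
  then have lo: "Min B \<in> B" and hi: "Max B \<in> B" and "B \<subseteq> {Min B..Max B}" by auto
  then have "real (card B) \<le> real (Max B - Min B) + 1"
    using card_mono[of "{Min B..Max B}" B] by simp
  moreover have "g (Min B) + t * real (Max B - Min B) \<le> g (Max B)"
    using lo hi \<open>finite B\<close>
    by (intro increments_imp_le[where g = g and t = t, OF incr]) (auto simp: B_def)
  then have "t * real (Max B - Min B) \<le> b - a" using lo hi by (simp add: B_def)
  then have "real (Max B - Min B) \<le> (b - a) / t" using \<open>0 < t\<close> by (simp add: field_simps)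
  ultimately have "real (card B) \<le> (b - a) / t + 1" by linarith
  then show ?thesis by (simp add: B_def)
qed

lemma kuzmin_landau_order_convex:
  fixes z :: "nat \<Rightarrow> complex" and g :: "nat \<Rightarrow> real" and S :: "nat set"
  assumes "finite S" and convex: "\<And>i j l. i \<in> S \<Longrightarrow> l \<in> S \<Longrightarrow> i \<le> j \<Longrightarrow> j \<le> l \<Longrightarrow> j \<in> S"
    and rotate: "\<And>k. k \<in> S \<Longrightarrow> z (Suc k) = z k * cis (g k)"
    and range: "\<And>k. k \<in> S \<Longrightarrow> g k \<in> {\<delta>..2 * pi - \<delta>}"
    and mono: "\<And>k. k \<in> S \<Longrightarrow> Suc k \<in> S \<Longrightarrow> g k \<le> g (Suc k)"
    and unit: "\<And>k. cmod (z k) = 1" and "0 < \<delta>" "\<delta> \<le> 1"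
  shows "cmod (sum z S) \<le> 9 / \<delta>"
proof (cases "S = {}")
  case True
  with \<open>0 < \<delta>\<close> show ?thesis by simp
next
  case False
  have "S = {Min S..Max S}"
  proof
    show "S \<subseteq> {Min S..Max S}" using \<open>finite S\<close> by auto
    show "{Min S..Max S} \<subseteq> S"
      using convex[OF Min_in[OF \<open>finite S\<close> False] Max_in[OF \<open>finite S\<close> False]] by auto
  qed
  moreover have "Min S \<le> Max S" using \<open>finite S\<close> False by simp
  ultimately obtain p q where "p \<le> q" and S: "S = {p..q}" by blast
  have "cmod (sum z S) \<le> 1 + 2 * cot (\<delta> / 2)"
    unfolding S
  proof (rule kuzmin_landau[where z = z and g = g,
        OF \<open>p \<le> q\<close> rotate[unfolded S] range[unfolded S] _ unit \<open>0 < \<delta>\<close>])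
    show "g k \<le> g (Suc k)" if "k \<in> {p..<q}" for k
      using mono[unfolded S] that by simp
  qed
  also have "\<dots> \<le> 1 + 2 * (2 / (\<delta> / 2))"
    using cot_le_two_div[of "\<delta> / 2"] \<open>0 < \<delta>\<close> \<open>\<delta> \<le> 1\<close> by simp
  also have "\<dots> \<le> 9 / \<delta>" using \<open>0 < \<delta>\<close> \<open>\<delta> \<le> 1\<close> by (simp add: field_simps)
  finally show ?thesis .
qed

lemma discrete_second_derivative_test:
  fixes z :: "nat \<Rightarrow> complex" and g :: "nat \<Rightarrow> real"
  assumes rotate: "\<And>k. k \<in> {m..n} \<Longrightarrow> z (Suc k) = z k * cis (g k)"
    and unit: "\<And>k. cmod (z k) = 1"
    and range: "\<And>k. k \<in> {m..n} \<Longrightarrow> \<bar>g k\<bar> \<le> 2 * pi - 1"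
    and incr: "\<And>k. k \<in> {m..<n} \<Longrightarrow> g k + t \<le> g (Suc k)"
    and "0 < t" "t \<le> 1"
  shows "cmod (\<Sum>k=m..n. z k) \<le> 21 / sqrt t"
proof -
  \<comment> \<open>\<open>\<delta> = sqrt t\<close> balances the Kuzmin--Landau bound \<open>9 / \<delta>\<close> on \<open>A\<close> and \<open>C\<close>
    against the number \<open>2 * \<delta> / t + 1\<close> of terms in \<open>B\<close>.\<close>
  define \<delta> where "\<delta> = sqrt t"
  have "0 < \<delta>" "\<delta> \<le> 1" "t = \<delta> * \<delta>" using \<open>0 < t\<close> \<open>t \<le> 1\<close> by (simp_all add: \<delta>_def)
  have mono: "g k \<le> g l" if "k \<in> {m..n}" "l \<in> {m..n}" "k \<le> l" for k l
  proof -
    have "g k + t * real (l - k) \<le> g l"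
      using that by (intro increments_imp_le[where g = g and t = t, OF incr]) auto
    then show ?thesis using \<open>0 < t\<close> by (smt (verit) mult_nonneg_nonneg of_nat_0_le_iff)
  qed
  define A where "A = {k\<in>{m..n}. g k \<le> - \<delta>}"
  define B where "B = {k\<in>{m..n}. - \<delta> < g k \<and> g k < \<delta>}"
  define C where "C = {k\<in>{m..n}. \<delta> \<le> g k}"
  have "(\<Sum>k=m..n. z k) = sum z (A \<union> B \<union> C)"
    by (rule sum.cong) (auto simp: A_def B_def C_def)
  also have "\<dots> = sum z (A \<union> B) + sum z C"
    using \<open>0 < \<delta>\<close> by (intro sum.union_disjoint) (auto simp: A_def B_def C_def)
  also have "sum z (A \<union> B) = sum z A + sum z B"
    using \<open>0 < \<delta>\<close> by (intro sum.union_disjoint) (auto simp: A_def B_def)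
  finally have "cmod (\<Sum>k=m..n. z k) \<le> cmod (sum z A) + cmod (sum z B) + cmod (sum z C)"
    by (metis norm_triangle_le order_refl add_mono)
  moreover have "cmod (sum z A) \<le> 9 / \<delta>"
  proof (rule kuzmin_landau_order_convex[where g = "\<lambda>k. g k + 2 * pi",
        OF _ _ _ _ _ unit \<open>0 < \<delta>\<close> \<open>\<delta> \<le> 1\<close>])
    show "finite A" by (simp add: A_def)
    show "j \<in> A" if "i \<in> A" "l \<in> A" "i \<le> j" "j \<le> l" for i j l
      using that mono[of j l] by (auto simp: A_def)
    show "z (Suc k) = z k * cis (g k + 2 * pi)" if "k \<in> A" for k
      using rotate that by (simp add: A_def flip: cis_mult)
    show "g k + 2 * pi \<in> {\<delta>..2 * pi - \<delta>}" if "k \<in> A" for k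
      using range[of k] that \<open>\<delta> \<le> 1\<close> by (auto simp: A_def)
    show "g k + 2 * pi \<le> g (Suc k) + 2 * pi" if "k \<in> A" "Suc k \<in> A" for k
      using that mono[of k "Suc k"] by (simp add: A_def)
  qed
  moreover have "cmod (sum z C) \<le> 9 / \<delta>"
  proof (rule kuzmin_landau_order_convex[where g = g, OF _ _ _ _ _ unit \<open>0 < \<delta>\<close> \<open>\<delta> \<le> 1\<close>])
    show "finite C" by (simp add: C_def)
    show "j \<in> C" if "i \<in> C" "l \<in> C" "i \<le> j" "j \<le> l" for i j l
      using that mono[of i j] by (auto simp: C_def)
    show "z (Suc k) = z k * cis (g k)" if "k \<in> C" for k
      using rotate that by (simp add: C_def)
    show "g k \<in> {\<delta>..2 * pi - \<delta>}" if "k \<in> C" for k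
      using range[of k] that \<open>\<delta> \<le> 1\<close> by (auto simp: C_def)
    show "g k \<le> g (Suc k)" if "k \<in> C" "Suc k \<in> C" for k
      using that mono[of k "Suc k"] by (simp add: C_def)
  qed
  moreover have "cmod (sum z B) \<le> 3 / \<delta>"
  proof -
    have "cmod (sum z B) \<le> real (card B)"
      using norm_sum[of z B] by (simp add: unit)
    also have "\<dots> \<le> (\<delta> - - \<delta>) / t + 1"
      unfolding B_def using \<open>0 < t\<close> \<open>0 < \<delta>\<close>
      by (intro card_between_le[where g = g and t = t, OF incr]) auto
    also have "\<dots> \<le> 3 / \<delta>"
      using \<open>0 < \<delta>\<close> \<open>\<delta> \<le> 1\<close> by (simp add: \<open>t = \<delta> * \<delta>\<close> field_simps)
    finally show ?thesis .
  qed
  ultimately show ?thesis by (simp add: \<delta>_def)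
qed

lemma phi_bounds:
  fixes \<xi> :: real assumes "1 \<le> \<xi>"
  shows "\<xi>\<^sup>2 + 1/3 \<le> phi \<xi>" and "phi \<xi> \<le> \<xi>\<^sup>2 + 1/2"
proof -
  have phi_eq: "phi \<xi> = sqrt (\<xi>\<^sup>2 * (\<xi>\<^sup>2 + 1))" using assms by (simp add: phi_def real_sqrt_mult)
  have "1 \<le> \<xi>\<^sup>2" using assms by (simp add: one_le_power)
  then show "\<xi>\<^sup>2 + 1/3 \<le> phi \<xi>" "phi \<xi> \<le> \<xi>\<^sup>2 + 1/2"
    unfolding phi_eq by (auto intro!: real_le_rsqrt real_le_lsqrt simp: power2_eq_square algebra_simps)
qed

lemma phi_increment_bounds:
  fixes \<xi> :: real assumes "1 \<le> \<xi>"
  shows "0 \<le> phi (\<xi> + 1) - phi \<xi>"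
    and "phi (\<xi> + 1) - phi \<xi> \<le> 2 * \<xi> + 7/6"
    and "1 \<le> (phi (\<xi> + 2) - phi (\<xi> + 1)) - (phi (\<xi> + 1) - phi \<xi>)"
proof -
  have "(\<xi> + 1)\<^sup>2 = \<xi>\<^sup>2 + 2 * \<xi> + 1" "(\<xi> + 2)\<^sup>2 = \<xi>\<^sup>2 + 4 * \<xi> + 4"
    by (simp_all add: power2_eq_square algebra_simps)
  moreover note phi_bounds[OF assms] phi_bounds[of "\<xi> + 1"] phi_bounds[of "\<xi> + 2"]
  ultimately show "0 \<le> phi (\<xi> + 1) - phi \<xi>"
    and "phi (\<xi> + 1) - phi \<xi> \<le> 2 * \<xi> + 7/6"
    and "1 \<le> (phi (\<xi> + 2) - phi (\<xi> + 1)) - (phi (\<xi> + 1) - phi \<xi>)"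
    using assms by simp_all
qed

lemma norm_sum_cis_phi_le:
  fixes N :: nat and t x :: real
  assumes "1 \<le> N" "0 < t" "t \<le> 1 / real N" "\<bar>x\<bar> \<le> 1"
  shows "cmod (\<Sum>k=1..N. cis (t * phi (real k) + real k * x)) \<le> 21 / sqrt t"
proof (rule discrete_second_derivative_test[where g = "\<lambda>k. t * (phi (real k + 1) - phi (real k)) + x"])
  have "t * real N \<le> 1" using assms by (simp add: field_simps)
  moreover have "t \<le> t * real N" using assms by simp
  ultimately show "t \<le> 1" by linarith
  show "0 < t" by fact
  show "\<bar>t * (phi (real k + 1) - phi (real k)) + x\<bar> \<le> 2 * pi - 1" if "k \<in> {1..N}" for k
  proof -
    have "phi (real k + 1) - phi (real k) \<le> 2 * real N + 7/6"
      using phi_increment_bounds(2)[of "real k"] that by simp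
    then have "t * (phi (real k + 1) - phi (real k)) \<le> t * (2 * real N + 7/6)"
      using \<open>0 < t\<close> by (intro mult_left_mono) auto
    also have "\<dots> = 2 * (t * real N) + 7/6 * t" by (simp add: algebra_simps)
    finally have "t * (phi (real k + 1) - phi (real k)) \<le> 2 * (t * real N) + 7/6 * t" .
    moreover have "0 \<le> t * (phi (real k + 1) - phi (real k))"
      using phi_increment_bounds(1)[of "real k"] that \<open>0 < t\<close> by simp
    ultimately show ?thesis using \<open>t * real N \<le> 1\<close> \<open>t \<le> 1\<close> \<open>\<bar>x\<bar> \<le> 1\<close> pi_gt3 by linarith
  qed
  show "t * (phi (real k + 1) - phi (real k)) + x + t
      \<le> t * (phi (real (Suc k) + 1) - phi (real (Suc k))) + x" if "k \<in> {1..<N}" for k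
  proof -
    have "t * 1 \<le> t * ((phi (real k + 2) - phi (real k + 1)) - (phi (real k + 1) - phi (real k)))"
      using phi_increment_bounds(3)[of "real k"] that \<open>0 < t\<close> by (intro mult_left_mono) auto
    moreover have "real (Suc k) + 1 = real k + 2" "real (Suc k) = real k + 1" by simp_all
    ultimately show ?thesis by (simp add: algebra_simps)
  qed
qed (simp_all add: cis_mult algebra_simps)

theorem lemma2p9:
  shows "\<exists>C>0. \<forall>(N::nat) (t::real) (x::real). N \<ge> 1 \<longrightarrow> 0 < \<bar>t\<bar> \<longrightarrow> \<bar>t\<bar> \<le> 1 / real N \<longrightarrow>
     x \<in> {-1..1} \<longrightarrow>
     cmod (\<Sum>k=1..N. cis (t * phi (real k) + real k * x)) \<le> C * \<bar>t\<bar> powr (-1/2)"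
proof (intro exI[of _ 21] conjI allI impI)
  fix N :: nat and t x :: real
  assume "N \<ge> 1" "0 < \<bar>t\<bar>" "\<bar>t\<bar> \<le> 1 / real N" "x \<in> {-1..1}"
  then have x: "\<bar>x\<bar> \<le> 1" by auto
  have "cmod (\<Sum>k=1..N. cis (t * phi (real k) + real k * x)) \<le> 21 / sqrt \<bar>t\<bar>"
  proof (cases "0 < t")
    case True
    then show ?thesis using norm_sum_cis_phi_le \<open>N \<ge> 1\<close> \<open>\<bar>t\<bar> \<le> 1 / real N\<close> x by simp
  next
    case False
    have "(\<Sum>k=1..N. cis (t * phi (real k) + real k * x))
        = cnj (\<Sum>k=1..N. cis ((- t) * phi (real k) + real k * (- x)))"
      by (simp add: cis_cnj algebra_simps)
    then have "cmod (\<Sum>k=1..N. cis (t * phi (real k) + real k * x))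
        = cmod (\<Sum>k=1..N. cis ((- t) * phi (real k) + real k * (- x)))"
      by (metis complex_mod_cnj)
    then show ?thesis
      using norm_sum_cis_phi_le[of N "- t" "- x"] False \<open>0 < \<bar>t\<bar>\<close> \<open>N \<ge> 1\<close> \<open>\<bar>t\<bar> \<le> 1 / real N\<close> x
      by simp
  qed
  moreover have "\<bar>t\<bar> powr (-1/2) = 1 / sqrt \<bar>t\<bar>"
    by (simp add: powr_minus_divide powr_half_sqrt)
  ultimately show "cmod (\<Sum>k=1..N. cis (t * phi (real k) + real k * x)) \<le> 21 * \<bar>t\<bar> powr (-1/2)"
    by simp
qed (simp)

end
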